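(* Let $W\in\mathcal W_0$ and let $\{W_n\}_{n\in\mathbb N}\subset\mathcal W_0$ satisfy $\|W_n-W\|_\square\to0$. For each $n$ let $u_n\in X_n$, and let $\nu^n\in\mathcal X$ be the Young measure $\nu^n_x=\delta_{u_n(x)}$. Suppose that $\nu^n\to\nu$ narrowly for some Young measure $\nu$; this always holds along a subsequence. Then $\nu\in\mathcal X$, so $\nu_x=\sum_{k=1}^N\theta_k(x)\delta_{\ell_k}$ for a.e. $x$. Moreover, $$\lim_{n\to\infty}\int_{[0,1]^2}W_n(x,y)\,f(u_n(x),u_n(y))\,dx\,dy=\int_{[0,1]^2}W(x,y)\Big(\int_{\mathbb R^2}f(\lambda,\mu)\,d\nu_x(\lambda)\,d\nu_y(\mu)\Big)dx\,dy.$$ The right-hand side equals $$\sum_{h,k=1}^N f(\ell_h,\ell_k)\int_{[0,1]^2}W(x,y)\,\theta_h(x)\,\theta_k(y)\,dx\,dy.$$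
   Context: A graphon is a bounded measurable symmetric function $W:[0,1]^2\to\mathbb R$. $\mathcal W_0$ denotes the set of graphons with values in $[0,1]$. The cut norm is $\|W\|_\square=\sup_{S,T\subseteq[0,1]}\big|\int_{S\times T}W\,dx\,dy\big|$, with the supremum over measurable sets. Fix a finite label set $\mathcal L=\{\ell_1,\dots,\ell_N\}\subset\mathbb R$ and a function $f:\mathcal L\times\mathcal L\to\mathbb R$. Set $I_1^n=[0,1/n]$ and $I_i^n=((i-1)/n,i/n]$ for $i=2,\dots,n$. $X_n$ is the set of measurable $u:[0,1]\to\mathcal L$ that are constant on each $I_i^n$. A Young measure on $[0,1]$ is a family $\{\nu_x\}_{x\in[0,1]}$ of Borel probability measures on $\mathbb R$ such that $x\mapsto\int f\,d\nu_x$ is measurable for every bounded continuous $f$. $\mathcal X$ is the set of Young measures with $\nu_x$ supported in $\mathcal L$ for a.e. $x$. Equivalently, $\nu_x=\sum_k\theta_k(x)\delta_{\ell_k}$ with measurable $\theta_k\ge0$ and $\sum_k\theta_k=1$. A sequence $\nu^n$ converges narrowly to $\nu$ if $\int_{\mathbb R}g\,d\nu^n_x\overset{*}{\rightharpoonup}\int_{\mathbb R}g\,d\nu_x$ in $L^\infty([0,1])$ for every bounded continuous $g:\mathbb R\to\mathbb R$. For sequences in $\mathcal X$, this is equivalent to $\theta^n_k\overset{*}{\rightharpoonup}\theta_k$ in $L^\infty([0,1])$ for every $k$. *)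

theory Defs
  imports "HOL-Probability.Probability"
begin

definition graphon :: "(real \<Rightarrow> real \<Rightarrow> real) \<Rightarrow> bool" where
  "graphon W \<longleftrightarrow>
     (\<lambda>z::real\<times>real. W (fst z) (snd z)) \<in> borel_measurable (restrict_space lebesgue ({0..1}\<times>{0..1}))
   \<and> (\<exists>C. \<forall>x\<in>{0..1}. \<forall>y\<in>{0..1}. \<bar>W x y\<bar> \<le> C)
   \<and> (\<forall>x\<in>{0..1}. \<forall>y\<in>{0..1}. W x y = W y x)"

definition graphon0 :: "(real \<Rightarrow> real \<Rightarrow> real) \<Rightarrow> bool" where
  "graphon0 W \<longleftrightarrow> graphon W \<and> (\<forall>x\<in>{0..1}. \<forall>y\<in>{0..1}. 0 \<le> W x y \<and> W x y \<le> 1)"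

definition cut_norm :: "(real \<Rightarrow> real \<Rightarrow> real) \<Rightarrow> real" where
  "cut_norm W = (SUP ST \<in> {(S,T). S \<in> sets (lebesgue :: real measure) \<and> T \<in> sets (lebesgue :: real measure)
                                   \<and> S \<subseteq> {0..1} \<and> T \<subseteq> {0..1}}.
       \<bar>LINT z : (fst ST \<times> snd ST) | (lebesgue :: (real\<times>real) measure). W (fst z) (snd z)\<bar>)"

definition Ival :: "nat \<Rightarrow> nat \<Rightarrow> real set" where
  "Ival n i = (if i = 1 then {0..1 / real n} else {(real i - 1) / real n <.. real i / real n})"

definition in_Xn :: "real set \<Rightarrow> nat \<Rightarrow> (real \<Rightarrow> real) \<Rightarrow> bool" where
  "in_Xn L n u \<longleftrightarrow> u \<in> borel_measurable (restrict_space lebesgue {0..1})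
     \<and> (\<forall>x\<in>{0..1}. u x \<in> L)
     \<and> (\<forall>i\<in>{1..n}. \<forall>x\<in>Ival n i. \<forall>y\<in>Ival n i. u x = u y)"

definition bounded_continuous_real :: "(real \<Rightarrow> real) \<Rightarrow> bool" where
  "bounded_continuous_real g \<longleftrightarrow> continuous_on UNIV g \<and> bounded (range g)"

definition young_measure :: "(real \<Rightarrow> real measure) \<Rightarrow> bool" where
  "young_measure \<nu> \<longleftrightarrow>
     (\<forall>x\<in>{0..1}. prob_space (\<nu> x) \<and> sets (\<nu> x) = sets (borel :: real measure))
   \<and> (\<forall>g. bounded_continuous_real g \<longrightarrow>
          (\<lambda>x. \<integral>t. g t \<partial>(\<nu> x)) \<in> borel_measurable (restrict_space lebesgue {0..1}))"

definition young_X :: "real set \<Rightarrow> (real \<Rightarrow> real measure) \<Rightarrow> bool" where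
  "young_X L \<nu> \<longleftrightarrow> young_measure \<nu>
     \<and> (AE x in lebesgue. x \<in> {0..1} \<longrightarrow> emeasure (\<nu> x) (UNIV - L) = 0)"

definition weak_star_Linf :: "(nat \<Rightarrow> real \<Rightarrow> real) \<Rightarrow> (real \<Rightarrow> real) \<Rightarrow> bool" where
  "weak_star_Linf G G0 \<longleftrightarrow>
     (\<forall>\<phi>. set_integrable lebesgue {0..1::real} \<phi> \<longrightarrow>
        (\<lambda>n. LINT x : {0..1} | lebesgue. \<phi> x * G n x) \<longlonglongrightarrow> (LINT x : {0..1} | lebesgue. \<phi> x * G0 x))"

definition narrow_conv :: "(nat \<Rightarrow> real \<Rightarrow> real measure) \<Rightarrow> (real \<Rightarrow> real measure) \<Rightarrow> bool" where
  "narrow_conv \<nu>s \<nu> \<longleftrightarrow>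
     (\<forall>g. bounded_continuous_real g \<longrightarrow>
        weak_star_Linf (\<lambda>n x. \<integral>t. g t \<partial>(\<nu>s n x)) (\<lambda>x. \<integral>t. g t \<partial>(\<nu> x)))"

definition theta_rep :: "real set \<Rightarrow> (real \<Rightarrow> real measure) \<Rightarrow> (real \<Rightarrow> real \<Rightarrow> real) \<Rightarrow> bool" where
  "theta_rep L \<nu> \<theta> \<longleftrightarrow>
     (\<forall>l\<in>L. \<theta> l \<in> borel_measurable (restrict_space lebesgue {0..1}) \<and> (\<forall>x\<in>{0..1}. 0 \<le> \<theta> l x))
   \<and> (\<forall>x\<in>{0..1}. (\<Sum>l\<in>L. \<theta> l x) = 1)
   \<and> (AE x in lebesgue. x \<in> {0..1} \<longrightarrow>
        (\<forall>A \<in> sets (borel :: real measure). measure (\<nu> x) A = (\<Sum>l\<in>L. \<theta> l x * indicator A l)))"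

end

theory Submission
  imports Defs
begin

text \<open>Testing narrow convergence against a bounded continuous function that vanishes exactly on \<open>L\<close>
  shows that \<open>\<nu>\<^sub>x\<close> is carried by \<open>L\<close> for a.e. \<open>x\<close>; testing against tent functions centred at the
  points of \<open>L\<close> identifies \<open>\<theta>\<^sub>l(x) = \<nu>\<^sub>x{l}\<close>. Since \<open>u\<^sub>n\<close> takes values in \<open>L\<close>, the \<open>n\<close>-th
  integral is \<open>\<Sum>\<^sub>h\<^sub>,\<^sub>k f(h,k) \<integral>\<integral> W\<^sub>n(x,y) 1[u\<^sub>n(x) = h] 1[u\<^sub>n(y) = k]\<close>, and each such term is an
  integral over a rectangle, so replacing \<open>W\<^sub>n\<close> by \<open>W\<close> costs at most \<open>\<parallel>W\<^sub>n - W\<parallel>\<^sub>\<box>\<close>. For fixed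
  \<open>W\<close> the form \<open>(a, b) \<mapsto> \<integral>\<integral> W(x,y) a(x) b(y)\<close> is jointly sequentially weak-* continuous on the
  unit ball of \<open>L\<^sup>\<infinity>\<close>, and \<open>1[u\<^sub>n = h] \<rightharpoonup> \<theta>\<^sub>h\<close>; the limit \<open>\<Sum>\<^sub>h\<^sub>,\<^sub>k f(h,k) \<integral>\<integral> W \<theta>\<^sub>h \<theta>\<^sub>k\<close>
  is also the integral of \<open>W\<close> against \<open>\<nu>\<^sub>x \<otimes> \<nu>\<^sub>y\<close>.\<close>

lemma integrable_indicator_dominated:
  fixes g :: "'a \<Rightarrow> real"
  assumes "g \<in> borel_measurable M" "S \<in> sets M" "emeasure M S < \<infinity>" "\<And>x. \<bar>g x\<bar> \<le> indicator S x"
  shows "integrable M g"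
  by (rule Bochner_Integration.integrable_bound[OF integrable_real_indicator[OF assms(2,3)]])
     (use assms in auto)

lemma integrable_unit_interval_dominated:
  fixes g :: "real \<Rightarrow> real"
  assumes "g \<in> borel_measurable borel" "\<And>x. \<bar>g x\<bar> \<le> indicator {0..1} x"
  shows "integrable lborel g"
  by (rule integrable_indicator_dominated[where S="{0..1}"]) (use assms in auto)

lemma integrable_unit_square_dominated:
  fixes g :: "real \<times> real \<Rightarrow> real"
  assumes "g \<in> borel_measurable borel" "\<And>x y. \<bar>g (x, y)\<bar> \<le> indicator {0..1} x * indicator {0..1} y"
  shows "integrable lborel g"
proof (rule integrable_indicator_dominated)
  have "cbox (0, 0) (1, 1) = {0..1::real} \<times> {0..1::real}"
    by (subst cbox_Pair_eq) (simp add: cbox_interval)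
  then show "emeasure lborel ({0..1::real} \<times> {0..1::real}) < \<infinity>"
    using emeasure_lborel_cbox_finite[of "(0::real, 0::real)" "(1, 1)"] by simp
  show "\<bar>g z\<bar> \<le> indicator ({0..1} \<times> {0..1}) z" for z
    using assms(2)[of "fst z" "snd z"] by (cases z) (simp add: indicator_times)
qed (use assms in \<open>auto intro: borel_closed closed_Times\<close>)

lemma AE_lborel_fst:
  assumes "AE x in lborel. P x"
  shows "AE z in (lborel :: (real \<times> real) measure). P (fst z)"
proof -
  obtain N where N: "N \<in> null_sets lborel" "{x \<in> space lborel. \<not> P x} \<subseteq> N"
    by (rule AE_E[OF assms]) blast
  have "N \<times> UNIV \<in> null_sets (lborel \<Otimes>\<^sub>M (lborel :: real measure))"
    using N(1) by (auto simp: null_sets_def lborel.emeasure_pair_measure_Times)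
  then have "AE z in lborel \<Otimes>\<^sub>M (lborel :: real measure). P (fst z)"
    by (rule AE_I') (use N(2) in auto)
  then show ?thesis by (simp only: lborel_prod)
qed

lemma AE_lborel_snd:
  assumes "AE x in lborel. P x"
  shows "AE z in (lborel :: (real \<times> real) measure). P (snd z)"
proof -
  obtain N where N: "N \<in> null_sets lborel" "{x \<in> space lborel. \<not> P x} \<subseteq> N"
    by (rule AE_E[OF assms]) blast
  have "UNIV \<times> N \<in> null_sets (lborel \<Otimes>\<^sub>M (lborel :: real measure))"
    using N(1) by (auto simp: null_sets_def lborel.emeasure_pair_measure_Times)
  then have "AE z in lborel \<Otimes>\<^sub>M (lborel :: real measure). P (snd z)"
    by (rule AE_I') (use N(2) in auto)
  then show ?thesis by (simp only: lborel_prod)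
qed

lemma borel_measurable_fst_comp:
  "g \<in> borel_measurable borel \<Longrightarrow> (\<lambda>z::real \<times> real. g (fst z)) \<in> borel_measurable borel"
  by (rule measurable_compose[of fst, OF borel_measurable_continuous_onI]) (auto intro: continuous_intros)

lemma borel_measurable_snd_comp:
  "g \<in> borel_measurable borel \<Longrightarrow> (\<lambda>z::real \<times> real. g (snd z)) \<in> borel_measurable borel"
  by (rule measurable_compose[of snd, OF borel_measurable_continuous_onI]) (auto intro: continuous_intros)

text \<open>Lebesgue measure on \<open>\<real>\<^sup>2\<close> is the completion of \<open>lborel\<close>, not the product of two
  one-dimensional Lebesgue measures, so Fubini is applied to Borel representatives of the
  Lebesgue-measurable integrands.\<close>

definition borel_rep :: "('a::euclidean_space \<Rightarrow> real) \<Rightarrow> 'a \<Rightarrow> real" where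
  "borel_rep f = (SOME g. g \<in> borel_measurable borel \<and> (AE x in lborel. f x = g x))"

lemma borel_rep:
  fixes f :: "'a::euclidean_space \<Rightarrow> real"
  assumes "f \<in> borel_measurable lebesgue"
  shows "borel_rep f \<in> borel_measurable borel" "AE x in lborel. f x = borel_rep f x"
proof -
  have "\<exists>g. g \<in> borel_measurable borel \<and> (AE x in lborel. f x = g x)"
    using completion_ex_borel_measurable_real[OF assms] by auto
  from someI_ex[OF this] show "borel_rep f \<in> borel_measurable borel" "AE x in lborel. f x = borel_rep f x"
    unfolding borel_rep_def by auto
qed

definition borel_rep_on :: "'a::euclidean_space set \<Rightarrow> real \<Rightarrow> ('a \<Rightarrow> real) \<Rightarrow> 'a \<Rightarrow> real" where
  "borel_rep_on S c f x = indicator S x * max (-c) (min c (borel_rep f x))"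

lemma borel_rep_on:
  fixes f :: "'a::euclidean_space \<Rightarrow> real"
  assumes f: "f \<in> borel_measurable lebesgue" and S: "S \<in> sets borel"
    and bounded: "\<And>x. \<bar>f x\<bar> \<le> c" and vanish: "\<And>x. x \<notin> S \<Longrightarrow> f x = 0"
  shows "borel_rep_on S c f \<in> borel_measurable borel" "\<And>x. \<bar>borel_rep_on S c f x\<bar> \<le> c"
    "\<And>x. x \<notin> S \<Longrightarrow> borel_rep_on S c f x = 0" "AE x in lborel. f x = borel_rep_on S c f x"
proof -
  note [measurable] = borel_rep(1)[OF f] S
  show "borel_rep_on S c f \<in> borel_measurable borel" unfolding borel_rep_on_def by measurable
  have "0 \<le> c" using bounded[of undefined] by simp
  then show "\<bar>borel_rep_on S c f x\<bar> \<le> c" for x unfolding borel_rep_on_def indicator_def by auto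
  show "x \<notin> S \<Longrightarrow> borel_rep_on S c f x = 0" for x unfolding borel_rep_on_def by simp
  show "AE x in lborel. f x = borel_rep_on S c f x"
    using borel_rep(2)[OF f]
  proof eventually_elim
    case (elim x)
    then show ?case using bounded[of x] vanish[of x] unfolding borel_rep_on_def indicator_def
      by (cases "x \<in> S") auto
  qed
qed

lemma set_integral_lebesgue_eq_lborel:
  fixes f g :: "'a::euclidean_space \<Rightarrow> real"
  assumes ae: "AE x in lborel. indicator S x *\<^sub>R f x = g x" and g: "g \<in> borel_measurable borel"
  shows "(LINT x:S|lebesgue. f x) = integral\<^sup>L lborel g"
proof -
  let ?f = "\<lambda>x. indicator S x *\<^sub>R f x"
  have g_leb: "g \<in> borel_measurable lebesgue" using measurable_completion[of g lborel borel] g by simp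
  have ae_leb: "AE x in lebesgue. g x = ?f x" using AE_completion[OF ae] by (auto elim: AE_mp)
  have f_leb: "?f \<in> borel_measurable lebesgue" by (rule borel_measurable_AE[OF g_leb ae_leb])
  have "(LINT x:S|lebesgue. f x) = integral\<^sup>L lebesgue g"
    unfolding set_lebesgue_integral_def
    by (rule integral_cong_AE[OF f_leb g_leb]) (use ae_leb in auto)
  also have "\<dots> = integral\<^sup>L lborel g" by (rule integral_completion) (use g in simp)
  finally show ?thesis .
qed

definition weak_star_lborel :: "(nat \<Rightarrow> real \<Rightarrow> real) \<Rightarrow> (real \<Rightarrow> real) \<Rightarrow> bool" where
  "weak_star_lborel a a0 \<longleftrightarrow>
     (\<forall>\<phi> \<in> borel_measurable borel. integrable lborel (\<lambda>x. indicator {0..1} x * \<phi> x) \<longrightarrow>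
        (\<lambda>n. \<integral>x. indicator {0..1} x * \<phi> x * a n x \<partial>lborel)
          \<longlonglongrightarrow> (\<integral>x. indicator {0..1} x * \<phi> x * a0 x \<partial>lborel))"

lemma weak_star_lborelD:
  assumes "weak_star_lborel a a0" "\<phi> \<in> borel_measurable borel"
    "integrable lborel (\<lambda>x. indicator {0..1} x * \<phi> x)"
  shows "(\<lambda>n. \<integral>x. indicator {0..1} x * \<phi> x * a n x \<partial>lborel)
      \<longlonglongrightarrow> (\<integral>x. indicator {0..1} x * \<phi> x * a0 x \<partial>lborel)"
  using assms unfolding weak_star_lborel_def by blast

lemma weak_star_lborel_if_Linf:
  assumes "weak_star_Linf G G0"
    and [measurable]: "\<And>n. a n \<in> borel_measurable borel" "a0 \<in> borel_measurable borel"
    and a: "\<And>n. AE x in lborel. indicator {0..1} x * G n x = a n x"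
    and a0: "AE x in lborel. indicator {0..1} x * G0 x = a0 x"
  shows "weak_star_lborel a a0"
  unfolding weak_star_lborel_def
proof (intro ballI impI)
  fix \<phi> :: "real \<Rightarrow> real"
  assume [measurable]: "\<phi> \<in> borel_measurable borel" and "integrable lborel (\<lambda>x. indicator {0..1} x * \<phi> x)"
  then have "set_integrable lebesgue {0..1} \<phi>"
    unfolding set_integrable_def by (simp add: integrable_completion)
  with assms(1) have "(\<lambda>n. LINT x:{0..1}|lebesgue. \<phi> x * G n x) \<longlonglongrightarrow> (LINT x:{0..1}|lebesgue. \<phi> x * G0 x)"
    unfolding weak_star_Linf_def by blast
  moreover have "(LINT x:{0..1}|lebesgue. \<phi> x * G n x) = (\<integral>x. indicator {0..1} x * \<phi> x * a n x \<partial>lborel)" for n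
    by (rule set_integral_lebesgue_eq_lborel) (use a[of n] in \<open>eventually_elim, auto simp: indicator_def\<close>)
  moreover have "(LINT x:{0..1}|lebesgue. \<phi> x * G0 x) = (\<integral>x. indicator {0..1} x * \<phi> x * a0 x \<partial>lborel)"
    by (rule set_integral_lebesgue_eq_lborel) (use a0 in \<open>eventually_elim, auto simp: indicator_def\<close>)
  ultimately show "(\<lambda>n. \<integral>x. indicator {0..1} x * \<phi> x * a n x \<partial>lborel)
      \<longlonglongrightarrow> (\<integral>x. indicator {0..1} x * \<phi> x * a0 x \<partial>lborel)"
    by simp
qed

lemma tendsto_integral_mult_weak_star_L1:
  fixes K :: "nat \<Rightarrow> real \<Rightarrow> real"
  assumes [measurable]: "\<And>n. b n \<in> borel_measurable borel" "\<And>n. K n \<in> borel_measurable borel"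
    "K0 \<in> borel_measurable borel"
    and b_bound: "\<And>n x. \<bar>b n x\<bar> \<le> 1"
    and K_bound: "\<And>n y. \<bar>K n y\<bar> \<le> indicator {0..1} y" "\<And>y. \<bar>K0 y\<bar> \<le> indicator {0..1} y"
    and K: "(\<lambda>n. \<integral>y. \<bar>K n y - K0 y\<bar> \<partial>lborel) \<longlonglongrightarrow> 0" and b: "weak_star_lborel b b0"
  shows "(\<lambda>n. \<integral>y. b n y * K n y \<partial>lborel) \<longlonglongrightarrow> (\<integral>y. b0 y * K0 y \<partial>lborel)"
proof -
  have integrable: "integrable lborel (\<lambda>y. c y * k y)"
    if [measurable]: "c \<in> borel_measurable borel" "k \<in> borel_measurable borel"
      and "\<And>y. \<bar>c y\<bar> \<le> 1" "\<And>y. \<bar>k y\<bar> \<le> indicator {0..1} y" for c k :: "real \<Rightarrow> real"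
  proof (rule integrable_unit_interval_dominated)
    show "\<bar>c y * k y\<bar> \<le> indicator {0..1} y" for y
      using mult_mono[OF that(3,4)] by (simp add: abs_mult)
  qed simp
  have pair: "(\<lambda>n. \<integral>y. b n y * K0 y \<partial>lborel) \<longlonglongrightarrow> (\<integral>y. b0 y * K0 y \<partial>lborel)"
  proof -
    have K0_vanish: "indicator {0..1} y * K0 y = K0 y" for y
      by (cases "y \<in> {0..1}") (use K_bound(2)[of y] in auto)
    have "integrable lborel (\<lambda>y. indicator {0..1} y * K0 y)"
      unfolding K0_vanish using integrable[of "\<lambda>_. 1" K0, OF _ _ _ K_bound(2)] by simp
    from weak_star_lborelD[OF b _ this] show ?thesis
      unfolding K0_vanish by (simp add: mult.commute)
  qed
  have "(\<lambda>n. (\<integral>y. b n y * K n y \<partial>lborel) - (\<integral>y. b0 y * K0 y \<partial>lborel)) \<longlonglongrightarrow> 0"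
  proof (rule Lim_null_comparison)
    show "(\<lambda>n. (\<integral>y. \<bar>K n y - K0 y\<bar> \<partial>lborel) + \<bar>(\<integral>y. b n y * K0 y \<partial>lborel) - (\<integral>y. b0 y * K0 y \<partial>lborel)\<bar>) \<longlonglongrightarrow> 0"
      using tendsto_add[OF K tendsto_rabs_zero[OF pair[THEN LIM_zero]]] by simp
    show "\<forall>\<^sub>F n in sequentially. norm ((\<integral>y. b n y * K n y \<partial>lborel) - (\<integral>y. b0 y * K0 y \<partial>lborel))
        \<le> (\<integral>y. \<bar>K n y - K0 y\<bar> \<partial>lborel) + \<bar>(\<integral>y. b n y * K0 y \<partial>lborel) - (\<integral>y. b0 y * K0 y \<partial>lborel)\<bar>"
    proof (intro always_eventually allI)
      fix n
      have i1: "integrable lborel (\<lambda>y. b n y * K n y)" and i2: "integrable lborel (\<lambda>y. b n y * K0 y)"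
        by (rule integrable[OF _ _ b_bound K_bound(1)] integrable[OF _ _ b_bound K_bound(2)]; simp)+
      have "\<bar>\<integral>y. b n y * K n y - b n y * K0 y \<partial>lborel\<bar> \<le> (\<integral>y. \<bar>K n y - K0 y\<bar> \<partial>lborel)"
      proof (rule integral_abs_bound_integral)
        show "integrable lborel (\<lambda>y. b n y * K n y - b n y * K0 y)" using i1 i2 by simp
        have "integrable lborel (K n)" "integrable lborel K0"
          using integrable[of "\<lambda>_. 1" "K n", OF _ _ _ K_bound(1)]
            integrable[of "\<lambda>_. 1" K0, OF _ _ _ K_bound(2)] by simp_all
        then show "integrable lborel (\<lambda>y. \<bar>K n y - K0 y\<bar>)" by simp
        show "\<bar>b n y * K n y - b n y * K0 y\<bar> \<le> \<bar>K n y - K0 y\<bar>" for y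
          using mult_right_mono[OF b_bound[of n y] abs_ge_zero[of "K n y - K0 y"]]
          by (simp add: abs_mult right_diff_distrib[symmetric])
      qed
      then show "norm ((\<integral>y. b n y * K n y \<partial>lborel) - (\<integral>y. b0 y * K0 y \<partial>lborel))
          \<le> (\<integral>y. \<bar>K n y - K0 y\<bar> \<partial>lborel) + \<bar>(\<integral>y. b n y * K0 y \<partial>lborel) - (\<integral>y. b0 y * K0 y \<partial>lborel)\<bar>"
        using i1 i2 by simp
    qed
  qed
  then show ?thesis by (simp add: LIM_zero_iff)
qed

locale unit_square_kernel =
  fixes W :: "real \<times> real \<Rightarrow> real"
  assumes borel_measurable_kernel[measurable]: "W \<in> borel_measurable borel"
    and kernel_bound: "\<And>x y. \<bar>W (x, y)\<bar> \<le> indicator {0..1} x * indicator {0..1} y"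
begin

definition kernel_apply :: "(real \<Rightarrow> real) \<Rightarrow> real \<Rightarrow> real" where
  "kernel_apply c y = (\<integral>x. W (x, y) * c x \<partial>lborel)"

lemma kernel_mult_bound:
  assumes "\<bar>c\<bar> \<le> 1"
  shows "\<bar>W (x, y) * c\<bar> \<le> indicator {0..1} x * indicator {0..1} y"
proof -
  have "\<bar>W (x, y) * c\<bar> \<le> (indicator {0..1} x * indicator {0..1} y) * 1"
    unfolding abs_mult using kernel_bound assms by (intro mult_mono) auto
  then show ?thesis by simp
qed

lemma integrable_tensor:
  assumes [measurable]: "c \<in> borel_measurable borel" "d \<in> borel_measurable borel"
    and "\<And>x. \<bar>c x\<bar> \<le> 1" "\<And>y. \<bar>d y\<bar> \<le> 1"
  shows "integrable lborel (\<lambda>z. W z * c (fst z) * d (snd z))"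
proof (rule integrable_unit_square_dominated)
  show "(\<lambda>z. W z * c (fst z) * d (snd z)) \<in> borel_measurable borel"
    using borel_measurable_fst_comp[OF assms(1)] borel_measurable_snd_comp[OF assms(2)] by measurable
  show "\<bar>W (x, y) * c (fst (x, y)) * d (snd (x, y))\<bar> \<le> indicator {0..1} x * indicator {0..1} y" for x y
    using kernel_mult_bound[of "c x * d y" x y] assms(3)[of x] assms(4)[of y]
    by (simp add: mult.assoc abs_mult mult_le_one)
qed

lemma integral_tensor_iterated:
  assumes [measurable]: "c \<in> borel_measurable borel" "d \<in> borel_measurable borel"
    and "\<And>x. \<bar>c x\<bar> \<le> 1" "\<And>y. \<bar>d y\<bar> \<le> 1"
  shows "(\<integral>z. W z * c (fst z) * d (snd z) \<partial>lborel) = (\<integral>y. d y * kernel_apply c y \<partial>lborel)"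
proof -
  have "integrable (lborel \<Otimes>\<^sub>M lborel) (\<lambda>(x, y). W (x, y) * c x * d y)"
    using integrable_tensor[OF assms] by (simp add: lborel_prod case_prod_beta')
  from lborel_pair.integral_snd[OF this] show ?thesis
    by (simp add: lborel_prod[symmetric] case_prod_beta' kernel_apply_def mult.commute)
qed

lemma borel_measurable_kernel_apply:
  assumes [measurable]: "c \<in> borel_measurable borel"
  shows "kernel_apply c \<in> borel_measurable borel"
proof -
  have "W \<in> borel_measurable (lborel \<Otimes>\<^sub>M lborel)"
    by (simp add: lborel_prod)
  then have "(\<lambda>(y, x). W (x, y) * c x) \<in> borel_measurable (lborel \<Otimes>\<^sub>M lborel)"
    by measurable
  from lborel.borel_measurable_lebesgue_integral[OF this] show ?thesis
    unfolding kernel_apply_def by simp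
qed

lemma kernel_apply_bound:
  assumes [measurable]: "c \<in> borel_measurable borel" and c: "\<And>x. \<bar>c x\<bar> \<le> 1"
  shows "\<bar>kernel_apply c y\<bar> \<le> indicator {0..1} y"
proof -
  have bound: "\<bar>W (x, y) * c x\<bar> \<le> indicator {0..1} x * indicator {0..1} y" for x
    using kernel_mult_bound c by blast
  have "(\<lambda>x. W (x, y)) \<in> borel_measurable lborel" by measurable
  moreover have "\<bar>W (x, y) * c x\<bar> \<le> indicator {0..1} x" for x
    using bound[of x] by (rule order_trans) (simp add: indicator_def)
  ultimately have integrable: "integrable lborel (\<lambda>x. W (x, y) * c x)"
    by (intro integrable_indicator_dominated[where S="{0..1}"]) auto
  have "\<bar>kernel_apply c y\<bar> \<le> (\<integral>x. indicator {0..1} (x::real) * indicator {0..1} y \<partial>lborel)"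
    unfolding kernel_apply_def by (rule integral_abs_bound_integral[OF integrable]) (use bound in auto)
  then show ?thesis by simp
qed

lemma kernel_apply_tendsto:
  assumes "weak_star_lborel a a0"
  shows "(\<lambda>n. kernel_apply (a n) y) \<longlonglongrightarrow> kernel_apply a0 y"
proof -
  have "(\<lambda>x. W (x, y)) \<in> borel_measurable lborel" by measurable
  then have m: "(\<lambda>x. W (x, y)) \<in> borel_measurable borel" by simp
  have vanish: "indicator {0..1} x * W (x, y) = W (x, y)" for x
    by (cases "x \<in> {0..1}") (use kernel_bound[of x y] in auto)
  have "\<bar>W (x, y)\<bar> \<le> indicator {0..1} x" for x
    using kernel_bound[of x y] by (rule order_trans) (simp add: indicator_def)
  then have "integrable lborel (\<lambda>x. indicator {0..1} x * W (x, y))"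
    unfolding vanish using m by (intro integrable_indicator_dominated[where S="{0..1}"]) auto
  from weak_star_lborelD[OF assms m this] show ?thesis
    unfolding kernel_apply_def vanish .
qed

lemma kernel_apply_tendsto_L1:
  assumes [measurable]: "\<And>n. a n \<in> borel_measurable borel" "a0 \<in> borel_measurable borel"
    and bounds: "\<And>n x. \<bar>a n x\<bar> \<le> 1" "\<And>x. \<bar>a0 x\<bar> \<le> 1" and a: "weak_star_lborel a a0"
  shows "(\<lambda>n. \<integral>y. \<bar>kernel_apply (a n) y - kernel_apply a0 y\<bar> \<partial>lborel) \<longlonglongrightarrow> 0"
proof -
  have [measurable]: "kernel_apply (a n) \<in> borel_measurable borel" "kernel_apply a0 \<in> borel_measurable borel" for n
    by (simp_all add: borel_measurable_kernel_apply)
  have bound: "\<bar>kernel_apply (a n) y - kernel_apply a0 y\<bar> \<le> 2 * indicator {0..1} y" for n y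
  proof -
    have "\<bar>kernel_apply (a n) y - kernel_apply a0 y\<bar> \<le> \<bar>kernel_apply (a n) y\<bar> + \<bar>kernel_apply a0 y\<bar>"
      by (rule abs_triangle_ineq4)
    then show ?thesis using kernel_apply_bound[of "a n" y] kernel_apply_bound[of a0 y] bounds by simp
  qed
  have "(\<lambda>n. \<integral>y. \<bar>kernel_apply (a n) y - kernel_apply a0 y\<bar> \<partial>lborel) \<longlonglongrightarrow> (\<integral>y. 0 \<partial>(lborel :: real measure))"
  proof (rule Bochner_Integration.integral_dominated_convergence
      [where w="\<lambda>y. 2 * indicator {0..1} y" and f="\<lambda>_. 0"
        and s="\<lambda>n y. \<bar>kernel_apply (a n) y - kernel_apply a0 y\<bar>"])
    show "AE y in lborel. (\<lambda>n. \<bar>kernel_apply (a n) y - kernel_apply a0 y\<bar>) \<longlonglongrightarrow> 0"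
      using kernel_apply_tendsto[OF a] by (intro AE_I2) (simp add: tendsto_rabs_zero LIM_zero)
  qed (use bound in auto)
  then show ?thesis by simp
qed

lemma tendsto_integral_tensor:
  assumes [measurable]: "\<And>n. a n \<in> borel_measurable borel" "a0 \<in> borel_measurable borel"
    "\<And>n. b n \<in> borel_measurable borel" "b0 \<in> borel_measurable borel"
    and bounds: "\<And>n x. \<bar>a n x\<bar> \<le> 1" "\<And>x. \<bar>a0 x\<bar> \<le> 1" "\<And>n x. \<bar>b n x\<bar> \<le> 1" "\<And>x. \<bar>b0 x\<bar> \<le> 1"
    and a: "weak_star_lborel a a0" and b: "weak_star_lborel b b0"
  shows "(\<lambda>n. \<integral>z. W z * a n (fst z) * b n (snd z) \<partial>lborel) \<longlonglongrightarrow> (\<integral>z. W z * a0 (fst z) * b0 (snd z) \<partial>lborel)"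
proof -
  have "(\<lambda>n. \<integral>y. b n y * kernel_apply (a n) y \<partial>lborel) \<longlonglongrightarrow> (\<integral>y. b0 y * kernel_apply a0 y \<partial>lborel)"
    using bounds
    by (intro tendsto_integral_mult_weak_star_L1 kernel_apply_tendsto_L1[OF assms(1,2) bounds(1,2) a] b
        borel_measurable_kernel_apply kernel_apply_bound) auto
  then show ?thesis using bounds by (simp add: integral_tensor_iterated)
qed

end

lemma integral_finite_support:
  fixes g :: "real \<Rightarrow> real"
  assumes "prob_space M" and sets_M: "sets M = sets borel" and supp: "AE t in M. t \<in> L" and "finite L"
    and g: "g \<in> borel_measurable borel"
  shows "(\<integral>t. g t \<partial>M) = (\<Sum>l\<in>L. g l * measure M {l})"
proof -
  interpret prob_space M by fact
  have space: "space M = UNIV" using sets_eq_imp_space_eq[OF sets_M] by simp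
  have [measurable]: "g \<in> borel_measurable M" "{l} \<in> sets M" for l
    using g sets_M by (simp_all add: measurable_cong_sets[OF sets_M refl])
  have "(\<integral>t. g t \<partial>M) = (\<integral>t. (\<Sum>l\<in>L. g l * indicator {l} t) \<partial>M)"
  proof (rule integral_cong_AE)
    show "AE t in M. g t = (\<Sum>l\<in>L. g l * indicator {l} t)"
      using supp by eventually_elim (simp add: indicator_def \<open>finite L\<close> sum.delta' mult.commute)
  qed measurable
  also have "\<dots> = (\<Sum>l\<in>L. g l * measure M {l})"
  proof -
    have "integrable M (\<lambda>t. g l * indicator {l} t)" for l
      by (intro integrable_mult_right integrable_real_indicator)
        (auto simp: space top.not_eq_extremum[symmetric])
    then show ?thesis by (simp add: Bochner_Integration.integral_sum space)
  qed
  finally show ?thesis .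
qed

lemma integral_pair_finite_support:
  fixes f :: "real \<Rightarrow> real \<Rightarrow> real"
  assumes "prob_space M" "prob_space N" and sets: "sets M = sets borel" "sets N = sets borel"
    and "finite L"
  shows "(\<integral>p. (if fst p \<in> L \<and> snd p \<in> L then f (fst p) (snd p) else 0) \<partial>(M \<Otimes>\<^sub>M N))
     = (\<Sum>h\<in>L. \<Sum>k\<in>L. f h k * (measure M {h} * measure N {k}))"
proof -
  interpret M: prob_space M by fact
  interpret N: prob_space N by fact
  interpret pair_prob_space M N ..
  have space: "space (M \<Otimes>\<^sub>M N) = UNIV"
    using sets_eq_imp_space_eq[OF sets(1)] sets_eq_imp_space_eq[OF sets(2)] by (simp add: space_pair_measure)
  have rect: "{h} \<times> {k} \<in> sets (M \<Otimes>\<^sub>M N)" for h k by (rule pair_measureI) (use sets in auto)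
  have "(if fst p \<in> L \<and> snd p \<in> L then f (fst p) (snd p) else 0)
      = (\<Sum>h\<in>L. \<Sum>k\<in>L. f h k * indicator ({h} \<times> {k}) p)" for p
  proof -
    obtain a b where p: "p = (a, b)" by (cases p)
    have "(\<Sum>h\<in>L. \<Sum>k\<in>L. f h k * indicator ({h} \<times> {k}) p)
        = (\<Sum>h\<in>L. if a = h then (\<Sum>k\<in>L. if b = k then f h k else 0) else 0)"
      by (intro sum.cong refl) (auto simp: p indicator_def intro!: sum.cong)
    also have "\<dots> = (if a \<in> L \<and> b \<in> L then f a b else 0)"
      using \<open>finite L\<close> by (simp add: sum.delta)
    finally show ?thesis by (simp add: p)
  qed
  moreover have "integrable (M \<Otimes>\<^sub>M N) (\<lambda>p. f h k * indicator ({h} \<times> {k}) p)" for h k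
    using rect by (intro integrable_mult_right integrable_real_indicator)
      (auto simp: top.not_eq_extremum[symmetric])
  ultimately have "(\<integral>p. (if fst p \<in> L \<and> snd p \<in> L then f (fst p) (snd p) else 0) \<partial>(M \<Otimes>\<^sub>M N))
      = (\<Sum>h\<in>L. \<Sum>k\<in>L. f h k * measure (M \<Otimes>\<^sub>M N) ({h} \<times> {k}))"
    using rect by (simp add: Bochner_Integration.integral_sum Bochner_Integration.integrable_sum space)
  also have "\<dots> = (\<Sum>h\<in>L. \<Sum>k\<in>L. f h k * (measure M {h} * measure N {k}))"
  proof -
    have "emeasure (M \<Otimes>\<^sub>M N) ({h} \<times> {k}) = emeasure M {h} * emeasure N {k}" for h k
      by (rule N.emeasure_pair_measure_Times) (use sets in auto)
    then show ?thesis by (simp add: measure_def enn2real_mult)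
  qed
  finally show ?thesis .
qed

definition min_gap :: "real set \<Rightarrow> real" where
  "min_gap L = Min (insert 1 ((\<lambda>p. \<bar>fst p - snd p\<bar>) ` {p \<in> L \<times> L. fst p \<noteq> snd p}))"

definition tent :: "real set \<Rightarrow> real \<Rightarrow> real \<Rightarrow> real" where
  "tent L l t = max 0 (1 - \<bar>t - l\<bar> / min_gap L)"

definition zero_set_fun :: "real set \<Rightarrow> real \<Rightarrow> real" where
  "zero_set_fun L t = min 1 (\<Prod>l\<in>L. \<bar>t - l\<bar>)"

lemma finite_gaps:
  "finite L \<Longrightarrow> finite (insert 1 ((\<lambda>p. \<bar>fst p - snd p\<bar>) ` {p \<in> L \<times> L. fst p \<noteq> snd p}))"
  by simp

lemma min_gap_pos: "finite L \<Longrightarrow> 0 < min_gap L"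
  unfolding min_gap_def by (subst Min_gr_iff[OF finite_gaps]) auto

lemma min_gap_le: "finite L \<Longrightarrow> a \<in> L \<Longrightarrow> b \<in> L \<Longrightarrow> a \<noteq> b \<Longrightarrow> min_gap L \<le> \<bar>a - b\<bar>"
  unfolding min_gap_def by (rule Min_le[OF finite_gaps]) (auto intro!: image_eqI[of _ _ "(a, b)"])

lemma tent_bounds: "finite L \<Longrightarrow> 0 \<le> tent L l t \<and> tent L l t \<le> 1"
  unfolding tent_def using min_gap_pos[of L] by auto

lemma tent_on_support:
  assumes "finite L" "l \<in> L" "m \<in> L"
  shows "tent L l m = (if m = l then 1 else 0)"
proof (cases "m = l")
  case False
  then have "1 \<le> \<bar>m - l\<bar> / min_gap L"
    using min_gap_le[OF assms(1,3,2)] min_gap_pos[OF assms(1)] by simp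
  with False show ?thesis unfolding tent_def by simp
qed (use min_gap_pos[OF assms(1)] in \<open>simp add: tent_def\<close>)

lemma bounded_continuous_tent: "finite L \<Longrightarrow> bounded_continuous_real (tent L l)"
  unfolding bounded_continuous_real_def
proof
  assume L: "finite L"
  show "continuous_on UNIV (tent L l)"
    unfolding tent_def by (intro continuous_intros) (use min_gap_pos[OF L] in auto)
  show "bounded (range (tent L l))"
    unfolding bounded_iff using tent_bounds[OF L] by (intro exI[of _ 1]) auto
qed

lemma zero_set_fun_bounds: "0 \<le> zero_set_fun L t \<and> zero_set_fun L t \<le> 1"
  unfolding zero_set_fun_def by (auto simp: prod_nonneg)

lemma zero_set_fun_eq_0_iff: "finite L \<Longrightarrow> zero_set_fun L t = 0 \<longleftrightarrow> t \<in> L"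
proof -
  assume "finite L"
  then have "(\<Prod>l\<in>L. \<bar>t - l\<bar>) = 0 \<longleftrightarrow> t \<in> L" by (simp add: prod_zero_iff)
  then show ?thesis
    unfolding zero_set_fun_def using prod_nonneg[of L "\<lambda>l. \<bar>t - l\<bar>"] by (auto simp: min_def)
qed

lemma bounded_continuous_zero_set_fun: "bounded_continuous_real (zero_set_fun L)"
  unfolding bounded_continuous_real_def
proof
  show "continuous_on UNIV (zero_set_fun L)"
    unfolding zero_set_fun_def by (intro continuous_intros)
  show "bounded (range (zero_set_fun L))"
    unfolding bounded_iff using zero_set_fun_bounds[of L] by (intro exI[of _ 1]) auto
qed

lemma borel_measurable_bounded_continuous:
  "bounded_continuous_real g \<Longrightarrow> g \<in> borel_measurable borel"
  unfolding bounded_continuous_real_def by (intro borel_measurable_continuous_onI) auto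

lemma integral_tent_finite_support:
  assumes "prob_space M" "sets M = sets borel" "AE t in M. t \<in> L" and L: "finite L" "l \<in> L"
  shows "(\<integral>t. tent L l t \<partial>M) = measure M {l}"
proof -
  have "(\<integral>t. tent L l t \<partial>M) = (\<Sum>m\<in>L. tent L l m * measure M {m})"
    using assms bounded_continuous_tent[OF L(1)]
    by (intro integral_finite_support borel_measurable_bounded_continuous) auto
  also have "\<dots> = (\<Sum>m\<in>L. if l = m then measure M {m} else 0)"
    by (rule sum.cong) (use L in \<open>auto simp: tent_on_support\<close>)
  also have "\<dots> = measure M {l}" using L by (simp add: sum.delta)
  finally show ?thesis .
qed

lemma AE_mem_if_integral_zero_set_fun:
  assumes "prob_space M" "sets M = sets borel" "finite L" "(\<integral>t. zero_set_fun L t \<partial>M) = 0"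
  shows "AE t in M. t \<in> L"
proof -
  interpret prob_space M by fact
  have "zero_set_fun L \<in> borel_measurable M"
    using borel_measurable_bounded_continuous[OF bounded_continuous_zero_set_fun]
    by (simp add: measurable_cong_sets[OF assms(2) refl])
  then have "integrable M (zero_set_fun L)"
    using zero_set_fun_bounds by (intro integrable_const_bound[where B=1]) auto
  then have "AE t in M. zero_set_fun L t = 0"
    using assms(4) zero_set_fun_bounds by (subst integral_nonneg_eq_0_iff_AE[symmetric]) auto
  then show ?thesis by eventually_elim (simp add: zero_set_fun_eq_0_iff[OF assms(3)])
qed

lemma young_measureD:
  "young_measure \<nu> \<Longrightarrow> x \<in> {0..1} \<Longrightarrow> prob_space (\<nu> x) \<and> sets (\<nu> x) = sets borel"
  unfolding young_measure_def by auto

lemma measurable_young_measure: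
  "young_measure \<nu> \<Longrightarrow> x \<in> {0..1} \<Longrightarrow> g \<in> borel_measurable borel \<Longrightarrow> g \<in> borel_measurable (\<nu> x)"
  using young_measureD[of \<nu> x] by (subst measurable_cong_sets[of "\<nu> x" borel]) auto

lemma young_measure_integral_measurable:
  "young_measure \<nu> \<Longrightarrow> bounded_continuous_real g \<Longrightarrow>
   (\<lambda>x. indicator {0..1} x * (\<integral>t. g t \<partial>\<nu> x)) \<in> borel_measurable lebesgue"
  unfolding young_measure_def by (subst (asm) borel_measurable_restrict_space_iff) auto

lemma narrow_limit_integral_zero_set_fun:
  fixes u :: "nat \<Rightarrow> real \<Rightarrow> real"
  assumes L: "finite L" and u: "\<And>n x. x \<in> {0..1} \<Longrightarrow> u n x \<in> L"
    and conv: "narrow_conv (\<lambda>n x. return borel (u n x)) \<nu>"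
  shows "(LINT x:{0..1}|lebesgue. \<integral>t. zero_set_fun L t \<partial>\<nu> x) = 0"
proof -
  have [measurable]: "zero_set_fun L \<in> borel_measurable borel"
    by (rule borel_measurable_bounded_continuous[OF bounded_continuous_zero_set_fun])
  have "weak_star_Linf (\<lambda>n x. \<integral>t. zero_set_fun L t \<partial>return borel (u n x))
      (\<lambda>x. \<integral>t. zero_set_fun L t \<partial>\<nu> x)"
    using conv bounded_continuous_zero_set_fun unfolding narrow_conv_def by blast
  moreover have "set_integrable lebesgue {0..1::real} (\<lambda>_. 1::real)"
    unfolding set_integrable_def by (simp add: integrable_real_indicator)
  ultimately have "(\<lambda>n. LINT x:{0..1}|lebesgue. 1 * (\<integral>t. zero_set_fun L t \<partial>return borel (u n x)))
      \<longlonglongrightarrow> (LINT x:{0..1}|lebesgue. 1 * (\<integral>t. zero_set_fun L t \<partial>\<nu> x))"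
    unfolding weak_star_Linf_def by blast
  moreover have "(LINT x:{0..1}|lebesgue. 1 * (\<integral>t. zero_set_fun L t \<partial>return borel (u n x))) = 0" for n
  proof -
    have "(\<lambda>x. indicator {0..1} x *\<^sub>R (1 * (\<integral>t. zero_set_fun L t \<partial>return borel (u n x)))) = (\<lambda>x. 0)"
      using u zero_set_fun_eq_0_iff[OF L] by (auto simp: integral_return indicator_def)
    then show ?thesis unfolding set_lebesgue_integral_def by simp
  qed
  ultimately show ?thesis by (simp add: LIMSEQ_const_iff)
qed

lemma narrow_limit_supported:
  fixes u :: "nat \<Rightarrow> real \<Rightarrow> real"
  assumes L: "finite L" and \<nu>: "young_measure \<nu>"
    and u: "\<And>n x. x \<in> {0..1} \<Longrightarrow> u n x \<in> L"
    and conv: "narrow_conv (\<lambda>n x. return borel (u n x)) \<nu>"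
  shows "AE x in lborel. x \<in> {0..1} \<longrightarrow> (AE t in \<nu> x. t \<in> L)"
proof -
  define H where "H = (\<lambda>x. indicator {0..1} x * (\<integral>t. zero_set_fun L t \<partial>\<nu> x))"
  have H_bounds: "0 \<le> H x \<and> H x \<le> indicator {0..1} x" for x
  proof (cases "x \<in> {0..1}")
    case True
    interpret prob_space "\<nu> x" using young_measureD[OF \<nu> True] by simp
    have "zero_set_fun L \<in> borel_measurable (\<nu> x)"
      by (intro measurable_young_measure[OF \<nu> True] borel_measurable_bounded_continuous
          bounded_continuous_zero_set_fun)
    then have "(\<integral>t. zero_set_fun L t \<partial>\<nu> x) \<le> (\<integral>t. 1 \<partial>\<nu> x)"
      using zero_set_fun_bounds by (intro integral_mono integrable_const_bound[where B=1]) auto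
    then show ?thesis using True zero_set_fun_bounds by (simp add: H_def prob_space)
  qed (simp add: H_def)
  have "integral\<^sup>L lebesgue H = 0"
    using narrow_limit_integral_zero_set_fun[OF L u conv] by (simp add: H_def set_lebesgue_integral_def)
  moreover have "integrable lebesgue H"
    using H_bounds young_measure_integral_measurable[OF \<nu> bounded_continuous_zero_set_fun]
    by (intro integrable_indicator_dominated[where S="{0..1}"]) (auto simp: H_def)
  ultimately have "AE x in lebesgue. H x = 0"
    using H_bounds by (subst integral_nonneg_eq_0_iff_AE[symmetric]) auto
  then have "AE x in lborel. H x = 0" by (simp add: AE_completion_iff)
  then show ?thesis
  proof eventually_elim
    case (elim x)
    show ?case
      using young_measureD[OF \<nu>] elim
      by (auto intro: AE_mem_if_integral_zero_set_fun[OF _ _ L] simp: H_def)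
  qed
qed

lemma young_X_if_supported:
  assumes L: "finite L" and \<nu>: "young_measure \<nu>"
    and supp: "AE x in lborel. x \<in> {0..1} \<longrightarrow> (AE t in \<nu> x. t \<in> L)"
  shows "young_X L \<nu>"
proof -
  have null: "emeasure (\<nu> x) (UNIV - L) = 0" if x: "x \<in> {0..1}" and "AE t in \<nu> x. t \<in> L" for x
  proof -
    have sets: "sets (\<nu> x) = sets borel" using young_measureD[OF \<nu> x] by simp
    then have "UNIV - L \<in> sets (\<nu> x)" using L by (simp add: open_Diff finite_imp_closed)
    from AE_iff_measurable[OF this, of "\<lambda>t. t \<in> L"] show ?thesis
      using that(2) sets_eq_imp_space_eq[OF sets] by auto
  qed
  have "AE x in lborel. x \<in> {0..1} \<longrightarrow> emeasure (\<nu> x) (UNIV - L) = 0"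
    using supp by eventually_elim (use null in blast)
  then show ?thesis unfolding young_X_def using \<nu> by (simp add: AE_completion)
qed

text \<open>The fallback value \<open>1 / card L\<close> keeps \<open>\<Sum>\<^sub>l \<theta> l x = 1\<close> on the null set where
  \<open>\<nu>\<^sub>x\<close> is not carried by \<open>L\<close>.\<close>

lemma theta_rep_exists:
  assumes L: "finite L" "L \<noteq> {}" and \<nu>: "young_measure \<nu>"
    and supp: "AE x in lborel. x \<in> {0..1} \<longrightarrow> (AE t in \<nu> x. t \<in> L)"
  shows "\<exists>\<theta>. theta_rep L \<nu> \<theta>"
proof -
  define T where "T l x = (\<integral>t. tent L l t \<partial>\<nu> x)" for l x
  define \<theta> where "\<theta> l x = (if (\<Sum>m\<in>L. T m x) = 1 then T l x else 1 / real (card L))" for l x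
  have [measurable]: "T l \<in> borel_measurable (restrict_space lebesgue {0..1})" for l
    unfolding T_def using \<nu> bounded_continuous_tent[OF L(1)] unfolding young_measure_def by blast
  have point_masses: "\<forall>A \<in> sets borel. measure (\<nu> x) A = (\<Sum>l\<in>L. \<theta> l x * indicator A l)"
    if x: "x \<in> {0..1}" and supp_x: "AE t in \<nu> x. t \<in> L" for x
  proof
    interpret prob_space "\<nu> x" using young_measureD[OF \<nu> x] by simp
    note integral = integral_finite_support[OF prob_space_axioms _ supp_x L(1)]
    have sets: "sets (\<nu> x) = sets borel" using young_measureD[OF \<nu> x] by simp
    have T: "T m x = measure (\<nu> x) {m}" if "m \<in> L" for m
      unfolding T_def by (rule integral_tent_finite_support[OF prob_space_axioms sets supp_x L(1) that])
    have "(\<Sum>m\<in>L. measure (\<nu> x) {m}) = 1"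
      using integral[OF sets, of "\<lambda>_. 1"] by (simp add: prob_space)
    fix A :: "real set" assume "A \<in> sets borel"
    have "measure (\<nu> x) A = (\<integral>t. indicator A t \<partial>\<nu> x)"
      using sets_eq_imp_space_eq[OF sets] \<open>A \<in> sets borel\<close> sets by simp
    also have "\<dots> = (\<Sum>l\<in>L. indicator A l * measure (\<nu> x) {l})"
      using \<open>A \<in> sets borel\<close> by (intro integral[OF sets]) simp
    also have "\<dots> = (\<Sum>l\<in>L. \<theta> l x * indicator A l)"
      using T \<open>(\<Sum>m\<in>L. measure (\<nu> x) {m}) = 1\<close> by (intro sum.cong) (simp_all add: \<theta>_def)
    finally show "measure (\<nu> x) A = (\<Sum>l\<in>L. \<theta> l x * indicator A l)" .
  qed
  have "theta_rep L \<nu> \<theta>" unfolding theta_rep_def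
  proof (intro conjI ballI)
    show "\<theta> l \<in> borel_measurable (restrict_space lebesgue {0..1})" for l
      unfolding \<theta>_def by measurable
    show "0 \<le> \<theta> l x" for l x
      unfolding \<theta>_def T_def using tent_bounds[OF L(1)] by (simp add: Bochner_Integration.integral_nonneg)
    show "(\<Sum>l\<in>L. \<theta> l x) = 1" for x
      using L by (cases "(\<Sum>m\<in>L. T m x) = 1") (simp_all add: \<theta>_def)
    have "AE x in lborel. x \<in> {0..1} \<longrightarrow>
        (\<forall>A \<in> sets (borel :: real measure). measure (\<nu> x) A = (\<Sum>l\<in>L. \<theta> l x * indicator A l))"
      using supp by eventually_elim (use point_masses in blast)
    then show "AE x in lebesgue. x \<in> {0..1} \<longrightarrow>
        (\<forall>A \<in> sets (borel :: real measure). measure (\<nu> x) A = (\<Sum>l\<in>L. \<theta> l x * indicator A l))"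
      by (rule AE_completion)
  qed
  then show ?thesis by blast
qed

lemma theta_rep_point_masses:
  assumes \<nu>: "young_measure \<nu>" and \<theta>: "theta_rep L \<nu> \<theta>" and L: "finite L"
  shows "AE x in lborel. x \<in> {0..1} \<longrightarrow> (\<forall>l\<in>L. measure (\<nu> x) {l} = \<theta> l x) \<and> (AE t in \<nu> x. t \<in> L)"
proof -
  have "AE x in lborel. x \<in> {0..1} \<longrightarrow>
        (\<forall>A \<in> sets (borel :: real measure). measure (\<nu> x) A = (\<Sum>l\<in>L. \<theta> l x * indicator A l))"
    using \<theta> unfolding theta_rep_def by (simp add: AE_completion_iff)
  then show ?thesis
  proof eventually_elim
    case (elim x)
    show ?case
    proof
      assume x: "x \<in> {0..1}"
      interpret prob_space "\<nu> x" using young_measureD[OF \<nu> x] by simp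
      have sets: "sets (\<nu> x) = sets borel" using young_measureD[OF \<nu> x] by simp
      have measure: "measure (\<nu> x) A = (\<Sum>l\<in>L. \<theta> l x * indicator A l)" if "A \<in> sets borel" for A
        using elim x that by blast
      have "measure (\<nu> x) {l} = \<theta> l x" if "l \<in> L" for l
        using measure[of "{l}"] that L by (simp add: indicator_def if_distrib sum.delta' cong: sum.cong)
      moreover have "UNIV - L \<in> sets borel" using L by (simp add: open_Diff finite_imp_closed)
      then have "UNIV - L \<in> null_sets (\<nu> x)"
        using measure[of "UNIV - L"] sets by (simp add: null_sets_def emeasure_eq_measure)
      then have "AE t in \<nu> x. t \<in> L" by (auto dest: AE_not_in)
      ultimately show "(\<forall>l\<in>L. measure (\<nu> x) {l} = \<theta> l x) \<and> (AE t in \<nu> x. t \<in> L)" by blast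
    qed
  qed
qed

lemma theta_rep_bounded:
  assumes \<theta>: "theta_rep L \<nu> \<theta>" and L: "finite L" and l: "l \<in> L"
  shows "\<theta> l \<in> borel_measurable (restrict_space lebesgue {0..1})" "\<forall>x\<in>{0..1}. \<bar>\<theta> l x\<bar> \<le> 1"
proof -
  show "\<theta> l \<in> borel_measurable (restrict_space lebesgue {0..1})" using \<theta> l unfolding theta_rep_def by blast
  show "\<forall>x\<in>{0..1}. \<bar>\<theta> l x\<bar> \<le> 1"
  proof
    fix x :: real assume x: "x \<in> {0..1}"
    have nonneg: "\<forall>m\<in>L. 0 \<le> \<theta> m x" and sum: "(\<Sum>m\<in>L. \<theta> m x) = 1"
      using \<theta> x unfolding theta_rep_def by blast+
    have "\<theta> l x \<le> (\<Sum>m\<in>L. \<theta> m x)" by (rule member_le_sum) (use L l nonneg in auto)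
    then show "\<bar>\<theta> l x\<bar> \<le> 1" using sum nonneg l by simp
  qed
qed

abbreviation unit_square :: "(real \<times> real) set" where
  "unit_square \<equiv> {0..1} \<times> {0..1}"

definition borel_graphon :: "(real \<Rightarrow> real \<Rightarrow> real) \<Rightarrow> real \<times> real \<Rightarrow> real" where
  "borel_graphon W = borel_rep_on unit_square 1 (\<lambda>z. indicator unit_square z * W (fst z) (snd z))"

definition borel_on_unit :: "(real \<Rightarrow> real) \<Rightarrow> real \<Rightarrow> real" where
  "borel_on_unit \<theta> = borel_rep_on {0..1} 1 (\<lambda>x. indicator {0..1} x * \<theta> x)"

lemma sets_borel_unit_square[simp]: "unit_square \<in> sets borel"
  by (intro borel_closed closed_Times) auto

lemma borel_graphon:
  assumes W: "graphon0 W"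
  shows "unit_square_kernel (borel_graphon W)" "\<And>z. z \<notin> unit_square \<Longrightarrow> borel_graphon W z = 0"
    "AE z in lborel. indicator unit_square z * W (fst z) (snd z) = borel_graphon W z"
proof -
  have "(\<lambda>z::real \<times> real. W (fst z) (snd z)) \<in> borel_measurable (restrict_space lebesgue unit_square)"
    using W unfolding graphon0_def graphon_def by blast
  then have m: "(\<lambda>z. indicator unit_square z * W (fst z) (snd z)) \<in> borel_measurable lebesgue"
    by (subst (asm) borel_measurable_restrict_space_iff) auto
  have "\<bar>indicator unit_square z * W (fst z) (snd z)\<bar> \<le> 1" for z
    using W unfolding graphon0_def by (cases z) (auto simp: indicator_def)
  note rep = borel_rep_on[OF m sets_borel_unit_square this, folded borel_graphon_def]
  show "AE z in lborel. indicator unit_square z * W (fst z) (snd z) = borel_graphon W z"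
    by (rule rep(4)) simp
  show vanish: "z \<notin> unit_square \<Longrightarrow> borel_graphon W z = 0" for z
    by (rule rep(3)) simp_all
  show "unit_square_kernel (borel_graphon W)"
  proof
    show "borel_graphon W \<in> borel_measurable borel" by (rule rep(1)) simp
    show "\<bar>borel_graphon W (x, y)\<bar> \<le> indicator {0..1} x * indicator {0..1} y" for x y
      using rep(2)[of "(x, y)"] vanish[of "(x, y)"] by (cases "(x, y) \<in> unit_square") auto
  qed
qed

lemma borel_on_unit:
  assumes m: "\<theta> \<in> borel_measurable (restrict_space lebesgue {0..1})" and b: "\<forall>x\<in>{0..1}. \<bar>\<theta> x\<bar> \<le> 1"
  shows "borel_on_unit \<theta> \<in> borel_measurable borel" "\<And>x. \<bar>borel_on_unit \<theta> x\<bar> \<le> 1"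
    "AE x in lborel. indicator {0..1} x * \<theta> x = borel_on_unit \<theta> x"
proof -
  have m': "(\<lambda>x. indicator {0..1} x * \<theta> x) \<in> borel_measurable lebesgue"
    using m by (subst (asm) borel_measurable_restrict_space_iff) auto
  have "\<bar>indicator {0..1} x * \<theta> x\<bar> \<le> 1" for x using b by (auto simp: indicator_def)
  note rep = borel_rep_on[OF m' atLeastAtMost_borel this]
  show "borel_on_unit \<theta> \<in> borel_measurable borel"
    unfolding borel_on_unit_def by (rule rep(1)) auto
  show "\<bar>borel_on_unit \<theta> x\<bar> \<le> 1" for x
    unfolding borel_on_unit_def by (rule rep(2)) auto
  show "AE x in lborel. indicator {0..1} x * \<theta> x = borel_on_unit \<theta> x"
    unfolding borel_on_unit_def by (rule rep(4)) auto
qed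

lemma set_integral_graphon_tensor:
  assumes W: "graphon0 W"
    and \<theta>1: "\<theta>1 \<in> borel_measurable (restrict_space lebesgue {0..1})" "\<forall>x\<in>{0..1}. \<bar>\<theta>1 x\<bar> \<le> 1"
    and \<theta>2: "\<theta>2 \<in> borel_measurable (restrict_space lebesgue {0..1})" "\<forall>x\<in>{0..1}. \<bar>\<theta>2 x\<bar> \<le> 1"
  shows "(LINT z:unit_square|lebesgue. W (fst z) (snd z) * \<theta>1 (fst z) * \<theta>2 (snd z))
       = (\<integral>z. borel_graphon W z * borel_on_unit \<theta>1 (fst z) * borel_on_unit \<theta>2 (snd z) \<partial>lborel)"
proof (rule set_integral_lebesgue_eq_lborel)
  note rep1 = borel_on_unit[OF \<theta>1] and rep2 = borel_on_unit[OF \<theta>2]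
  interpret unit_square_kernel "borel_graphon W" by (rule borel_graphon(1)[OF W])
  show "(\<lambda>z. borel_graphon W z * borel_on_unit \<theta>1 (fst z) * borel_on_unit \<theta>2 (snd z)) \<in> borel_measurable borel"
    using borel_measurable_fst_comp[OF rep1(1)] borel_measurable_snd_comp[OF rep2(1)] by measurable
  show "AE z in lborel. indicator unit_square z *\<^sub>R (W (fst z) (snd z) * \<theta>1 (fst z) * \<theta>2 (snd z))
      = borel_graphon W z * borel_on_unit \<theta>1 (fst z) * borel_on_unit \<theta>2 (snd z)"
    using borel_graphon(3)[OF W] AE_lborel_fst[OF rep1(3)] AE_lborel_snd[OF rep2(3)]
    by eventually_elim (auto simp: indicator_def borel_graphon(2)[OF W])
qed

lemma integral_double_sum:
  fixes g :: "'i \<Rightarrow> 'i \<Rightarrow> 'a \<Rightarrow> real"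
  assumes "finite L" and "\<And>h k. h \<in> L \<Longrightarrow> k \<in> L \<Longrightarrow> integrable M (g h k)"
  shows "(\<integral>z. (\<Sum>h\<in>L. \<Sum>k\<in>L. c h k * g h k z) \<partial>M) = (\<Sum>h\<in>L. \<Sum>k\<in>L. c h k * integral\<^sup>L M (g h k))"
  using assms by (simp add: Bochner_Integration.integral_sum Bochner_Integration.integrable_sum)

lemma set_integral_graphon_double_sum:
  fixes F :: "real \<times> real \<Rightarrow> real"
  assumes L: "finite L" and W: "graphon0 W"
    and [measurable]: "\<And>h. h \<in> L \<Longrightarrow> a h \<in> borel_measurable borel" and a: "\<And>h x. h \<in> L \<Longrightarrow> \<bar>a h x\<bar> \<le> 1"
    and F: "AE z in lborel. z \<in> unit_square \<longrightarrow> F z = (\<Sum>h\<in>L. \<Sum>k\<in>L. c h k * (a h (fst z) * a k (snd z)))"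
  shows "(LINT z:unit_square|lebesgue. W (fst z) (snd z) * F z)
    = (\<Sum>h\<in>L. \<Sum>k\<in>L. c h k * (\<integral>z. borel_graphon W z * a h (fst z) * a k (snd z) \<partial>lborel))"
proof -
  interpret unit_square_kernel "borel_graphon W" by (rule borel_graphon(1)[OF W])
  define G where "G h k z = borel_graphon W z * a h (fst z) * a k (snd z)" for h k z
  have "(LINT z:unit_square|lebesgue. W (fst z) (snd z) * F z) = (\<integral>z. (\<Sum>h\<in>L. \<Sum>k\<in>L. c h k * G h k z) \<partial>lborel)"
  proof (rule set_integral_lebesgue_eq_lborel)
    have "G h k \<in> borel_measurable borel" if "h \<in> L" "k \<in> L" for h k
      unfolding G_def using borel_measurable_fst_comp[of "a h"] borel_measurable_snd_comp[of "a k"] that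
      by measurable
    then show "(\<lambda>z. \<Sum>h\<in>L. \<Sum>k\<in>L. c h k * G h k z) \<in> borel_measurable borel" by measurable
    show "AE z in lborel. indicator unit_square z *\<^sub>R (W (fst z) (snd z) * F z) = (\<Sum>h\<in>L. \<Sum>k\<in>L. c h k * G h k z)"
      using F borel_graphon(3)[OF W]
    proof eventually_elim
      case (elim z)
      then show ?case
        by (cases "z \<in> unit_square")
          (simp_all add: G_def borel_graphon(2)[OF W] sum_distrib_left mult_ac)
    qed
  qed
  also have "\<dots> = (\<Sum>h\<in>L. \<Sum>k\<in>L. c h k * (\<integral>z. G h k z \<partial>lborel))"
    by (rule integral_double_sum[OF L]) (unfold G_def, intro integrable_tensor, simp_all add: a)
  finally show ?thesis by (simp add: G_def)
qed

lemma theta_rep_double_integral: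
  fixes f :: "real \<Rightarrow> real \<Rightarrow> real"
  assumes L: "finite L" and \<nu>: "young_measure \<nu>" and \<theta>: "theta_rep L \<nu> \<theta>" and W: "graphon0 W"
  shows "(LINT z:unit_square|lebesgue. W (fst z) (snd z) *
              (\<integral>p. (if fst p \<in> L \<and> snd p \<in> L then f (fst p) (snd p) else 0)
                  \<partial>(\<nu> (fst z) \<Otimes>\<^sub>M \<nu> (snd z))))
       = (\<Sum>h\<in>L. \<Sum>k\<in>L. f h k * (LINT z:unit_square|lebesgue. W (fst z) (snd z) * \<theta> h (fst z) * \<theta> k (snd z)))"
proof -
  note \<theta>_bounded = theta_rep_bounded[OF \<theta> L]
  let ?t = "\<lambda>h. borel_on_unit (\<theta> h)"
  have "AE x in lborel. \<forall>h\<in>L. indicator {0..1} x * \<theta> h x = ?t h x"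
    by (rule AE_finite_allI[OF L]) (rule borel_on_unit(3)[OF \<theta>_bounded])
  then have "AE x in lborel. x \<in> {0..1} \<longrightarrow> (\<forall>l\<in>L. measure (\<nu> x) {l} = ?t l x)"
    using theta_rep_point_masses[OF \<nu> \<theta> L] by eventually_elim auto
  note point_masses = AE_lborel_fst[OF this] AE_lborel_snd[OF this]
  have "AE z in lborel. z \<in> unit_square \<longrightarrow>
      (\<integral>p. (if fst p \<in> L \<and> snd p \<in> L then f (fst p) (snd p) else 0) \<partial>(\<nu> (fst z) \<Otimes>\<^sub>M \<nu> (snd z)))
        = (\<Sum>h\<in>L. \<Sum>k\<in>L. f h k * (?t h (fst z) * ?t k (snd z)))"
    using point_masses
  proof eventually_elim
    case (elim z)
    show ?case
    proof
      assume "z \<in> unit_square"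
      then have "fst z \<in> {0..1}" "snd z \<in> {0..1}" by auto
      then show "(\<integral>p. (if fst p \<in> L \<and> snd p \<in> L then f (fst p) (snd p) else 0) \<partial>(\<nu> (fst z) \<Otimes>\<^sub>M \<nu> (snd z)))
          = (\<Sum>h\<in>L. \<Sum>k\<in>L. f h k * (?t h (fst z) * ?t k (snd z)))"
        using elim young_measureD[OF \<nu>] by (simp add: integral_pair_finite_support[OF _ _ _ _ L])
    qed
  qed
  then have "(LINT z:unit_square|lebesgue. W (fst z) (snd z) *
              (\<integral>p. (if fst p \<in> L \<and> snd p \<in> L then f (fst p) (snd p) else 0)
                  \<partial>(\<nu> (fst z) \<Otimes>\<^sub>M \<nu> (snd z))))
      = (\<Sum>h\<in>L. \<Sum>k\<in>L. f h k * (\<integral>z. borel_graphon W z * ?t h (fst z) * ?t k (snd z) \<partial>lborel))"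
    using borel_on_unit[OF \<theta>_bounded] by (intro set_integral_graphon_double_sum[OF L W]) auto
  also have "\<dots> = (\<Sum>h\<in>L. \<Sum>k\<in>L. f h k * (LINT z:unit_square|lebesgue. W (fst z) (snd z) * \<theta> h (fst z) * \<theta> k (snd z)))"
    by (intro sum.cong refl arg_cong2[where f="(*)"] set_integral_graphon_tensor[OF W, symmetric] \<theta>_bounded)
  finally show ?thesis .
qed

definition level_indicator :: "(real \<Rightarrow> real) \<Rightarrow> real \<Rightarrow> real \<Rightarrow> real" where
  "level_indicator u h = borel_on_unit (\<lambda>x. indicator {h} (u x))"

lemma level_indicator:
  assumes "u \<in> borel_measurable (restrict_space lebesgue {0..1})"
  shows "level_indicator u h \<in> borel_measurable borel" "\<And>x. \<bar>level_indicator u h x\<bar> \<le> 1"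
    "AE x in lborel. indicator {0..1} x * indicator {h} (u x) = level_indicator u h x"
proof -
  have "(\<lambda>x. indicator {h} (u x)) \<in> borel_measurable (restrict_space lebesgue {0..1})"
    using assms by measurable
  moreover have "\<forall>x\<in>{0..1}. \<bar>indicator {h} (u x) :: real\<bar> \<le> 1" by (simp add: indicator_def)
  ultimately show "level_indicator u h \<in> borel_measurable borel" "\<bar>level_indicator u h x\<bar> \<le> 1"
    "AE x in lborel. indicator {0..1} x * indicator {h} (u x) = level_indicator u h x" for x
    unfolding level_indicator_def by (rule borel_on_unit)+
qed

lemma double_sum_indicator_singletons:
  fixes f :: "real \<Rightarrow> real \<Rightarrow> real"
  assumes "finite L" "a \<in> L" "b \<in> L"
  shows "(\<Sum>h\<in>L. \<Sum>k\<in>L. f h k * (indicator {h} a * indicator {k} b)) = f a b"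
proof -
  have "(\<Sum>h\<in>L. \<Sum>k\<in>L. f h k * (indicator {h} a * indicator {k} b))
      = (\<Sum>h\<in>L. if a = h then (\<Sum>k\<in>L. if b = k then f h k else 0) else 0)"
    by (intro sum.cong refl) (auto simp: indicator_def intro!: sum.cong)
  also have "\<dots> = f a b" using assms by (simp add: sum.delta)
  finally show ?thesis .
qed

lemma graphon_integral_level_sets:
  fixes f :: "real \<Rightarrow> real \<Rightarrow> real"
  assumes L: "finite L" and W: "graphon0 W"
    and u: "u \<in> borel_measurable (restrict_space lebesgue {0..1})" "\<And>x. x \<in> {0..1} \<Longrightarrow> u x \<in> L"
  shows "(LINT z:unit_square|lebesgue. W (fst z) (snd z) * f (u (fst z)) (u (snd z)))
    = (\<Sum>h\<in>L. \<Sum>k\<in>L. f h k *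
         (\<integral>z. borel_graphon W z * level_indicator u h (fst z) * level_indicator u k (snd z) \<partial>lborel))"
proof (rule set_integral_graphon_double_sum[OF L W])
  let ?a = "level_indicator u"
  have "AE x in lborel. \<forall>h\<in>L. indicator {0..1} x * indicator {h} (u x) = ?a h x"
    by (rule AE_finite_allI[OF L]) (rule level_indicator(3)[OF u(1)])
  note pointwise = AE_lborel_fst[OF this] AE_lborel_snd[OF this]
  show "AE z in lborel. z \<in> unit_square \<longrightarrow>
      f (u (fst z)) (u (snd z)) = (\<Sum>h\<in>L. \<Sum>k\<in>L. f h k * (?a h (fst z) * ?a k (snd z)))"
    using pointwise
  proof eventually_elim
    case (elim z)
    show ?case
    proof
      assume "z \<in> unit_square"
      then have x: "fst z \<in> {0..1}" and y: "snd z \<in> {0..1}" by auto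
      have "(\<Sum>h\<in>L. \<Sum>k\<in>L. f h k * (?a h (fst z) * ?a k (snd z)))
          = (\<Sum>h\<in>L. \<Sum>k\<in>L. f h k * (indicator {h} (u (fst z)) * indicator {k} (u (snd z))))"
        using elim x y by (intro sum.cong refl) simp
      also have "\<dots> = f (u (fst z)) (u (snd z))"
        by (rule double_sum_indicator_singletons[OF L u(2)[OF x] u(2)[OF y]])
      finally show "f (u (fst z)) (u (snd z)) = (\<Sum>h\<in>L. \<Sum>k\<in>L. f h k * (?a h (fst z) * ?a k (snd z)))" ..
    qed
  qed
qed (use level_indicator[OF u(1)] in auto)

lemma cut_norm_ge_rectangle:
  assumes W1: "graphon0 W1" and W2: "graphon0 W2"
    and S: "S \<in> sets lebesgue" "S \<subseteq> {0..1}" and T: "T \<in> sets lebesgue" "T \<subseteq> {0..1}"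
  shows "\<bar>LINT z:S \<times> T|lebesgue. W1 (fst z) (snd z) - W2 (fst z) (snd z)\<bar>
      \<le> cut_norm (\<lambda>x y. W1 x y - W2 x y)"
proof -
  define rect where "rect = (\<lambda>(A, B). \<bar>LINT z:A \<times> B|lebesgue. W1 (fst z) (snd z) - W2 (fst z) (snd z)\<bar>)"
  define C :: real where "C = (\<integral>z. indicator unit_square z \<partial>lebesgue)"
  have "rect (A, B) \<le> C" if "A \<subseteq> {0..1}" "B \<subseteq> {0..1}" for A B
  proof (cases "integrable lebesgue (\<lambda>z. indicator (A \<times> B) z *\<^sub>R (W1 (fst z) (snd z) - W2 (fst z) (snd z)))")
    case True
    have "integrable lborel (indicator unit_square :: real \<times> real \<Rightarrow> real)"
      by (rule integrable_unit_square_dominated[OF borel_measurable_indicator[OF sets_borel_unit_square]])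
        (simp add: indicator_def)
    then have "integrable lebesgue (indicator unit_square :: real \<times> real \<Rightarrow> real)"
      by (simp add: integrable_completion)
    moreover have "\<bar>indicator (A \<times> B) z *\<^sub>R (W1 (fst z) (snd z) - W2 (fst z) (snd z))\<bar> \<le> indicator unit_square z" for z
    proof (cases "z \<in> A \<times> B")
      case True
      then have z: "fst z \<in> {0..1}" "snd z \<in> {0..1}" using that by auto
      then have "0 \<le> W1 (fst z) (snd z) \<and> W1 (fst z) (snd z) \<le> 1" "0 \<le> W2 (fst z) (snd z) \<and> W2 (fst z) (snd z) \<le> 1"
        using W1 W2 unfolding graphon0_def by blast+
      with True z show ?thesis by (simp add: indicator_def abs_le_iff mem_Times_iff)
    qed simp
    ultimately have "\<bar>\<integral>z. indicator (A \<times> B) z *\<^sub>R (W1 (fst z) (snd z) - W2 (fst z) (snd z)) \<partial>lebesgue\<bar> \<le> C"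
      unfolding C_def by (intro integral_abs_bound_integral[OF True])
    then show ?thesis by (simp add: rect_def set_lebesgue_integral_def)
  next
    case False
    then show ?thesis
      by (simp add: rect_def C_def set_lebesgue_integral_def not_integrable_integral_eq)
  qed
  then have "rect (S, T) \<le> (SUP ST \<in> {(S, T). S \<in> sets lebesgue \<and> T \<in> sets lebesgue \<and> S \<subseteq> {0..1} \<and> T \<subseteq> {0..1}}. rect ST)"
    using S T by (intro cSUP_upper bdd_aboveI2[where M=C]) auto
  then show ?thesis unfolding cut_norm_def rect_def by (simp add: case_prod_beta')
qed

lemma level_sets_cut_norm_bound:
  assumes W1: "graphon0 W1" and W2: "graphon0 W2" and u: "u \<in> borel_measurable (restrict_space lebesgue {0..1})"
  shows "\<bar>(\<integral>z. borel_graphon W1 z * level_indicator u h (fst z) * level_indicator u k (snd z) \<partial>lborel)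
        - (\<integral>z. borel_graphon W2 z * level_indicator u h (fst z) * level_indicator u k (snd z) \<partial>lborel)\<bar>
      \<le> cut_norm (\<lambda>x y. W1 x y - W2 x y)"
proof -
  interpret W1: unit_square_kernel "borel_graphon W1" by (rule borel_graphon(1)[OF W1])
  interpret W2: unit_square_kernel "borel_graphon W2" by (rule borel_graphon(1)[OF W2])
  let ?a = "level_indicator u"
  note a = level_indicator[OF u]
  define A where "A l = {x \<in> {0..1}. u x = l}" for l
  have indicator_A: "indicator (A l) x = (indicator {0..1} x * indicator {l} (u x) :: real)" for l x
    by (auto simp: A_def indicator_def)
  have "(\<lambda>x. indicator {l} (u x) :: real) \<in> borel_measurable (restrict_space lebesgue {0..1})" for l
    using u by measurable
  then have "(\<lambda>x. indicator {0..1} x * indicator {l} (u x) :: real) \<in> borel_measurable lebesgue" for l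
    by (subst (asm) borel_measurable_restrict_space_iff) auto
  then have A: "A l \<in> sets lebesgue" "A l \<subseteq> {0..1}" for l
    unfolding indicator_A[symmetric] borel_measurable_indicator_iff by (auto simp: A_def)
  have "(LINT z:A h \<times> A k|lebesgue. W1 (fst z) (snd z) - W2 (fst z) (snd z))
      = (\<integral>z. borel_graphon W1 z * ?a h (fst z) * ?a k (snd z) - borel_graphon W2 z * ?a h (fst z) * ?a k (snd z) \<partial>lborel)"
  proof (rule set_integral_lebesgue_eq_lborel)
    show "(\<lambda>z. borel_graphon W1 z * ?a h (fst z) * ?a k (snd z) - borel_graphon W2 z * ?a h (fst z) * ?a k (snd z))
        \<in> borel_measurable borel"
      using borel_measurable_fst_comp[OF a(1)] borel_measurable_snd_comp[OF a(1)] by measurable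
    show "AE z in lborel. indicator (A h \<times> A k) z *\<^sub>R (W1 (fst z) (snd z) - W2 (fst z) (snd z))
        = borel_graphon W1 z * ?a h (fst z) * ?a k (snd z) - borel_graphon W2 z * ?a h (fst z) * ?a k (snd z)"
      using AE_lborel_fst[OF a(3)[of h]] AE_lborel_snd[OF a(3)[of k]] borel_graphon(3)[OF W1] borel_graphon(3)[OF W2]
    proof eventually_elim
      case (elim z)
      show ?case
      proof (cases "z \<in> unit_square")
        case True
        with elim show ?thesis
          by (cases z) (simp add: indicator_times indicator_A[symmetric] algebra_simps)
      qed (auto simp: borel_graphon(2)[OF W1] borel_graphon(2)[OF W2] A_def indicator_def mem_Times_iff)
    qed
  qed
  also have "\<dots> = (\<integral>z. borel_graphon W1 z * ?a h (fst z) * ?a k (snd z) \<partial>lborel)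
        - (\<integral>z. borel_graphon W2 z * ?a h (fst z) * ?a k (snd z) \<partial>lborel)"
    using a by (intro Bochner_Integration.integral_diff W1.integrable_tensor W2.integrable_tensor) auto
  finally show ?thesis using cut_norm_ge_rectangle[OF W1 W2 A(1)[of h] A(2)[of h] A(1)[of k] A(2)[of k]] by simp
qed

lemma weak_star_level_indicator:
  fixes u :: "nat \<Rightarrow> real \<Rightarrow> real"
  assumes L: "finite L" and \<nu>: "young_measure \<nu>" and \<theta>: "theta_rep L \<nu> \<theta>" and h: "h \<in> L"
    and u: "\<And>n. u n \<in> borel_measurable (restrict_space lebesgue {0..1})" "\<And>n x. x \<in> {0..1} \<Longrightarrow> u n x \<in> L"
    and conv: "narrow_conv (\<lambda>n x. return borel (u n x)) \<nu>"
  shows "weak_star_lborel (\<lambda>n. level_indicator (u n) h) (borel_on_unit (\<theta> h))"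
proof (rule weak_star_lborel_if_Linf)
  have tent_m: "tent L h \<in> borel_measurable borel"
    by (rule borel_measurable_bounded_continuous[OF bounded_continuous_tent[OF L]])
  note t = borel_on_unit[OF theta_rep_bounded[OF \<theta> L h]]
  show "weak_star_Linf (\<lambda>n x. \<integral>t. tent L h t \<partial>return borel (u n x)) (\<lambda>x. \<integral>t. tent L h t \<partial>\<nu> x)"
    using conv bounded_continuous_tent[OF L] unfolding narrow_conv_def by blast
  show "AE x in lborel. indicator {0..1} x * (\<integral>t. tent L h t \<partial>return borel (u n x)) = level_indicator (u n) h x" for n
    using level_indicator(3)[OF u(1)[of n], of h] by eventually_elim (use tent_on_support[OF L h u(2)] in \<open>auto simp: indicator_def integral_return tent_m\<close>)
  show "AE x in lborel. indicator {0..1} x * (\<integral>t. tent L h t \<partial>\<nu> x) = borel_on_unit (\<theta> h) x"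
    using t(3) theta_rep_point_masses[OF \<nu> \<theta> L]
  proof eventually_elim
    case (elim x)
    show ?case
    proof (cases "x \<in> {0..1}")
      case True
      then have "(\<integral>t. tent L h t \<partial>\<nu> x) = \<theta> h x"
        using young_measureD[OF \<nu> True] elim h by (simp add: integral_tent_finite_support[OF _ _ _ L h])
      then show ?thesis using elim True by simp
    qed (use elim in simp)
  qed
qed (use level_indicator[OF u(1)] borel_on_unit[OF theta_rep_bounded[OF \<theta> L h]] in auto)

lemma tendsto_level_set_integrals:
  fixes u :: "nat \<Rightarrow> real \<Rightarrow> real"
  assumes L: "finite L" and W: "graphon0 W" and Wn: "\<And>n. graphon0 (Wn n)"
    and cut: "(\<lambda>n. cut_norm (\<lambda>x y. Wn n x y - W x y)) \<longlonglongrightarrow> 0"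
    and \<nu>: "young_measure \<nu>" and \<theta>: "theta_rep L \<nu> \<theta>"
    and u: "\<And>n. u n \<in> borel_measurable (restrict_space lebesgue {0..1})" "\<And>n x. x \<in> {0..1} \<Longrightarrow> u n x \<in> L"
    and conv: "narrow_conv (\<lambda>n x. return borel (u n x)) \<nu>"
    and hk: "h \<in> L" "k \<in> L"
  shows "(\<lambda>n. \<integral>z. borel_graphon (Wn n) z * level_indicator (u n) h (fst z) * level_indicator (u n) k (snd z) \<partial>lborel)
    \<longlonglongrightarrow> (\<integral>z. borel_graphon W z * borel_on_unit (\<theta> h) (fst z) * borel_on_unit (\<theta> k) (snd z) \<partial>lborel)"
proof -
  interpret unit_square_kernel "borel_graphon W" by (rule borel_graphon(1)[OF W])
  define J where "J n V = (\<integral>z. borel_graphon V z * level_indicator (u n) h (fst z) * level_indicator (u n) k (snd z) \<partial>lborel)" for n V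
  have "(\<lambda>n. J n W) \<longlonglongrightarrow> (\<integral>z. borel_graphon W z * borel_on_unit (\<theta> h) (fst z) * borel_on_unit (\<theta> k) (snd z) \<partial>lborel)"
    unfolding J_def using level_indicator[OF u(1)] borel_on_unit[OF theta_rep_bounded[OF \<theta> L]] hk
    by (intro tendsto_integral_tensor weak_star_level_indicator[OF L \<nu> \<theta> _ u conv]) auto
  moreover have "(\<lambda>n. J n (Wn n) - J n W) \<longlonglongrightarrow> 0"
  proof (rule Lim_null_comparison[OF _ cut])
    show "\<forall>\<^sub>F n in sequentially. norm (J n (Wn n) - J n W) \<le> cut_norm (\<lambda>x y. Wn n x y - W x y)"
      unfolding J_def using level_sets_cut_norm_bound[OF Wn W u(1)] by simp
  qed
  ultimately show ?thesis
    unfolding J_def[symmetric] using tendsto_add by fastforce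
qed

theorem lemma11:
  fixes L :: "real set" and f :: "real \<Rightarrow> real \<Rightarrow> real"
    and W :: "real \<Rightarrow> real \<Rightarrow> real" and Wn :: "nat \<Rightarrow> real \<Rightarrow> real \<Rightarrow> real"
    and u :: "nat \<Rightarrow> real \<Rightarrow> real" and \<nu> :: "real \<Rightarrow> real measure"
  assumes L: "finite L" "L \<noteq> {}"
    and W: "graphon0 W" and Wn: "\<And>n. graphon0 (Wn n)"
    and cut: "(\<lambda>n. cut_norm (\<lambda>x y. Wn n x y - W x y)) \<longlonglongrightarrow> 0"
    and u: "\<And>n. in_Xn L n (u n)"
    and \<nu>: "young_measure \<nu>"
    and conv: "narrow_conv (\<lambda>n x. return borel (u n x)) \<nu>"
  shows "young_X L \<nu>
    \<and> (\<exists>\<theta>. theta_rep L \<nu> \<theta>)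
    \<and> (\<lambda>n. LINT z : {0..1}\<times>{0..1} | (lebesgue :: (real\<times>real) measure).
            Wn n (fst z) (snd z) * f (u n (fst z)) (u n (snd z)))
        \<longlonglongrightarrow> (LINT z : {0..1}\<times>{0..1} | (lebesgue :: (real\<times>real) measure).
            W (fst z) (snd z) *
              (\<integral>p. (if fst p \<in> L \<and> snd p \<in> L then f (fst p) (snd p) else 0)
                  \<partial>(\<nu> (fst z) \<Otimes>\<^sub>M \<nu> (snd z))))
    \<and> (\<forall>\<theta>. theta_rep L \<nu> \<theta> \<longrightarrow>
         (LINT z : {0..1}\<times>{0..1} | (lebesgue :: (real\<times>real) measure).
            W (fst z) (snd z) *
              (\<integral>p. (if fst p \<in> L \<and> snd p \<in> L then f (fst p) (snd p) else 0)
                  \<partial>(\<nu> (fst z) \<Otimes>\<^sub>M \<nu> (snd z))))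
         = (\<Sum>h\<in>L. \<Sum>k\<in>L. f h k *
              (LINT z : {0..1}\<times>{0..1} | (lebesgue :: (real\<times>real) measure).
                 W (fst z) (snd z) * \<theta> h (fst z) * \<theta> k (snd z))))"
proof -
  have u_meas: "\<And>n. u n \<in> borel_measurable (restrict_space lebesgue {0..1})"
    and u_L: "\<And>n x. x \<in> {0..1} \<Longrightarrow> u n x \<in> L"
    using u unfolding in_Xn_def by blast+
  have supp: "AE x in lborel. x \<in> {0..1} \<longrightarrow> (AE t in \<nu> x. t \<in> L)"
    by (rule narrow_limit_supported[OF L(1) \<nu> u_L conv])
  obtain \<theta> where \<theta>: "theta_rep L \<nu> \<theta>" using theta_rep_exists[OF L \<nu> supp] by blast
  let ?J = "\<lambda>n h k. \<integral>z. borel_graphon (Wn n) z * level_indicator (u n) h (fst z) * level_indicator (u n) k (snd z) \<partial>lborel"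
  let ?K = "\<lambda>h k. \<integral>z. borel_graphon W z * borel_on_unit (\<theta> h) (fst z) * borel_on_unit (\<theta> k) (snd z) \<partial>lborel"
  have "(\<lambda>n. \<Sum>h\<in>L. \<Sum>k\<in>L. f h k * ?J n h k) \<longlonglongrightarrow> (\<Sum>h\<in>L. \<Sum>k\<in>L. f h k * ?K h k)"
    by (intro tendsto_sum tendsto_mult_left tendsto_level_set_integrals[OF L(1) W Wn cut \<nu> \<theta> u_meas u_L conv])
  moreover have "(LINT z:unit_square|lebesgue. Wn n (fst z) (snd z) * f (u n (fst z)) (u n (snd z)))
      = (\<Sum>h\<in>L. \<Sum>k\<in>L. f h k * ?J n h k)" for n
    by (rule graphon_integral_level_sets[OF L(1) Wn u_meas u_L])
  moreover have "(LINT z:unit_square|lebesgue. W (fst z) (snd z) *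
        (\<integral>p. (if fst p \<in> L \<and> snd p \<in> L then f (fst p) (snd p) else 0) \<partial>(\<nu> (fst z) \<Otimes>\<^sub>M \<nu> (snd z))))
      = (\<Sum>h\<in>L. \<Sum>k\<in>L. f h k * ?K h k)"
    unfolding theta_rep_double_integral[OF L(1) \<nu> \<theta> W]
    by (intro sum.cong refl arg_cong2[where f="(*)"] set_integral_graphon_tensor[OF W] theta_rep_bounded[OF \<theta> L(1)])
  ultimately show ?thesis
    using young_X_if_supported[OF L(1) \<nu> supp] \<theta> theta_rep_double_integral[OF L(1) \<nu> _ W] by auto
qed

end
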